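(* Assume $|\mathbb O|\ge 2$ and let $\mathcal X_0=\{x\in\mathbb O^n: x_i=\theta \text{ for some } i\in\mathcal V\}$. The following are equivalent: (1) for every $x(0)\in\mathcal X_0$, and along any update sequence, the PID opinion dynamics almost surely converges to the consensus state $x_1=\cdots=x_n=\theta$ in finite time; (2) the only non-empty strictly cohesive subset of $\mathcal V$ is $\mathcal V$ itself.
   Context: Let $n\ge 1$, $\mathcal V=\{1,\dots,n\}$, and let $W=(w_{ij})$ be an $n\times n$ row-stochastic matrix (nonnegative entries, each row summing to $1$). The opinion set is a finite set of consecutive integers $\mathbb O=\{k,k+1,\dots,k+s\}$, and $\theta\in\mathbb O$ is a fixed "truth". For $x\in\mathbb O^n$, $i\in\mathcal V$, $z\in\mathbb O$, define $C^i_{\mathrm{social}}(z;x)=\sum_{j=1}^n w_{ij}|z-x_j|$ and $C^i_{\mathrm{cog}}(z)=|z-\theta|$, and $P_i(x)=\{z\in\mathbb O: C^i_{\mathrm{social}}(z;x)\le C^i_{\mathrm{social}}(x_i;x),\ |z-\theta|\le |x_i-\theta|\}$. PID opinion dynamics: starting from $x(0)$, at each time $t+1$ a node $i$ is chosen uniformly at random from $\mathcal V$ and sets $x_i(t+1)$ to an element chosen at random from $P_i(x(t))$, each element having positive probability; all other nodes keep their opinions. A set $\mathcal M\subseteq\mathcal V$ is strictly cohesive if $\sum_{j\in\mathcal M}w_{ij}>\tfrac12$ for every $i\in\mathcal M$. *)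

theory Defs
  imports "HOL-Probability.Probability"
begin

text \<open>Nodes are the elements of a finite (nonempty) type 'n; states are maps 'n \<Rightarrow> int.
  The opinion set is O = {k..k+s}.\<close>

definition row_stochastic :: "('n::finite \<Rightarrow> 'n \<Rightarrow> real) \<Rightarrow> bool" where
  "row_stochastic W \<longleftrightarrow> (\<forall>i j. 0 \<le> W i j) \<and> (\<forall>i. (\<Sum>j\<in>UNIV. W i j) = 1)"

definition social_cost :: "('n::finite \<Rightarrow> 'n \<Rightarrow> real) \<Rightarrow> ('n \<Rightarrow> int) \<Rightarrow> 'n \<Rightarrow> int \<Rightarrow> real" where
  "social_cost W x i z = (\<Sum>j\<in>UNIV. W i j * real_of_int \<bar>z - x j\<bar>)"

definition cog_cost :: "int \<Rightarrow> int \<Rightarrow> real" where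
  "cog_cost \<theta> z = real_of_int \<bar>z - \<theta>\<bar>"

definition PID_set :: "('n::finite \<Rightarrow> 'n \<Rightarrow> real) \<Rightarrow> int set \<Rightarrow> int \<Rightarrow> ('n \<Rightarrow> int) \<Rightarrow> 'n \<Rightarrow> int set" where
  "PID_set W Op \<theta> x i = {z \<in> Op. social_cost W x i z \<le> social_cost W x i (x i) \<and> cog_cost \<theta> z \<le> cog_cost \<theta> (x i)}"

definition admissible_rule :: "('n::finite \<Rightarrow> 'n \<Rightarrow> real) \<Rightarrow> int set \<Rightarrow> int \<Rightarrow> (('n \<Rightarrow> int) \<Rightarrow> 'n \<Rightarrow> int pmf) \<Rightarrow> bool" where
  "admissible_rule W Op \<theta> q \<longleftrightarrow> (\<forall>x i. (\<forall>j. x j \<in> Op) \<longrightarrow> set_pmf (q x i) = PID_set W Op \<theta> x i)"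

definition PID_step :: "(('n::finite \<Rightarrow> int) \<Rightarrow> 'n \<Rightarrow> int pmf) \<Rightarrow> ('n \<Rightarrow> int) \<Rightarrow> ('n \<Rightarrow> int) pmf" where
  "PID_step q x = bind_pmf (pmf_of_set UNIV) (\<lambda>i. map_pmf (\<lambda>z. x(i := z)) (q x i))"

fun PID_traj :: "(('n::finite \<Rightarrow> int) \<Rightarrow> 'n \<Rightarrow> int pmf) \<Rightarrow> ('n \<Rightarrow> int) \<Rightarrow> nat \<Rightarrow> ('n \<Rightarrow> int) list pmf" where
  "PID_traj q x0 0 = return_pmf [x0]"
| "PID_traj q x0 (Suc t) = bind_pmf (PID_traj q x0 t) (\<lambda>xs. map_pmf (\<lambda>y. xs @ [y]) (PID_step q (last xs)))"

definition consensus_prob :: "(('n::finite \<Rightarrow> int) \<Rightarrow> 'n \<Rightarrow> int pmf) \<Rightarrow> int \<Rightarrow> ('n \<Rightarrow> int) \<Rightarrow> nat \<Rightarrow> real" where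
  "consensus_prob q \<theta> x0 t = measure_pmf.prob (PID_traj q x0 t) {xs. \<exists>y\<in>set xs. \<forall>i. y i = \<theta>}"

definition strictly_cohesive :: "('n::finite \<Rightarrow> 'n \<Rightarrow> real) \<Rightarrow> 'n set \<Rightarrow> bool" where
  "strictly_cohesive W M \<longleftrightarrow> (\<forall>i\<in>M. (\<Sum>j\<in>M. W i j) > 1/2)"

end

theory Submission
  imports Defs
begin

(* Let T be the set of nodes whose opinion differs from \<theta>. In a state of X_0 that is
   not the consensus, T is neither empty nor everything, so it is not strictly cohesive: some i \<in> T
   puts at most half of its weight on T. Moving x_i one unit towards \<theta> brings it closer to the
   nodes at \<theta> (weight \<ge> 1/2) and at most one unit farther from the rest, so the move lies in P_i(x).
   Hence the potential \<Sum>_i |x_i - \<theta>|, which no admissible update increases, strictly drops with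
   positive probability at every non-consensus state; on the finite state space this probability
   is uniformly bounded below, so the probability of not being at consensus at time t is summable. If M is a proper nonempty strictly cohesive set, the state with some a \<noteq> \<theta> on M and
   \<theta> elsewhere is frozen: nodes outside M may not leave \<theta>, and a node of M moving by d gets at
   most d closer to the nodes outside M but d farther from those in M, whose weight exceeds 1/2. *)

lemma finite_funs_into:
  assumes "finite A"
  shows "finite {x :: 'n::finite \<Rightarrow> 'a. \<forall>i. x i \<in> A}"
  using finite_set_of_finite_funs[of "UNIV :: 'n set" A undefined] assms by simp

lemma finite_pos_lower_bound:
  fixes f :: "'a \<Rightarrow> real"
  assumes "finite A" and "\<And>x. x \<in> A \<Longrightarrow> 0 < f x"
  shows "\<exists>\<delta>>0. \<forall>x\<in>A. \<delta> \<le> f x"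
proof (cases "A = {}")
  case True
  then show ?thesis by (intro exI[of _ 1]) simp
next
  case False
  then show ?thesis using assms by (intro exI[of _ "Min (f ` A)"]) simp
qed

lemma expectation_plus_prob_decrease_le:
  fixes V :: "'a \<Rightarrow> nat"
  assumes fin: "finite (set_pmf p)" and le: "\<And>y. y \<in> set_pmf p \<Longrightarrow> V y \<le> c"
  shows "measure_pmf.expectation p (\<lambda>y. real (V y)) + measure_pmf.prob p {y. V y < c} \<le> real c"
proof -
  have "measure_pmf.expectation p (\<lambda>y. real (V y) + indicator {y. V y < c} y)
      \<le> measure_pmf.expectation p (\<lambda>_. real c)"
    using le by (intro integral_mono_AE integrable_measure_pmf_finite[OF fin] AE_pmfI)
      (fastforce simp: indicator_def)
  then show ?thesis
    by (simp add: integrable_measure_pmf_finite[OF fin])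
qed

lemma expectation_bind_pmf_le:
  fixes f g :: "'a \<Rightarrow> real"
  assumes "finite A" and "set_pmf p \<subseteq> A" and "\<And>x. x \<in> A \<Longrightarrow> finite (set_pmf (K x))"
    and "\<And>x. x \<in> A \<Longrightarrow> measure_pmf.expectation (K x) f \<le> g x"
  shows "measure_pmf.expectation (p \<bind> K) f \<le> measure_pmf.expectation p g"
proof -
  have "measure_pmf.expectation (p \<bind> K) f = (\<Sum>x\<in>A. pmf p x * measure_pmf.expectation (K x) f)"
    using assms(1-3) by (simp add: pmf_expectation_bind)
  also have "\<dots> \<le> (\<Sum>x\<in>A. pmf p x * g x)"
    using assms(4) by (intro sum_mono mult_left_mono) auto
  also have "\<dots> = measure_pmf.expectation p g"
    using assms(1,2) by (subst integral_measure_pmf[of A]) (auto simp: mult.commute)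
  finally show ?thesis .
qed

lemma tendsto_0_of_potential_drop:
  fixes E P :: "nat \<Rightarrow> real"
  assumes "\<delta> > 0" and "\<And>t. 0 \<le> P t" and "\<And>t. 0 \<le> E t" and "\<And>t. E (Suc t) + \<delta> * P t \<le> E t"
  shows "P \<longlonglongrightarrow> 0"
proof -
  have partial: "E t + \<delta> * (\<Sum>i<t. P i) \<le> E 0" for t
    by (induction t) (use assms(4) in \<open>auto simp: algebra_simps intro: order_trans[rotated]\<close>)
  have "(\<Sum>i<t. P i) \<le> E 0 / \<delta>" for t
    using partial[of t] assms(1) assms(3)[of t] by (simp add: field_simps)
  then have "summable P"
    using assms(2) by (intro summableI_nonneg_bounded)
  then show ?thesis
    by (rule summable_LIMSEQ_zero)
qed

lemma lyapunov_prob_goal_tendsto_1: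
  fixes K :: "'a \<Rightarrow> 'a pmf" and V :: "'a \<Rightarrow> nat" and D :: "nat \<Rightarrow> 'a pmf"
  assumes S: "finite S" and D0: "set_pmf (D 0) \<subseteq> S" and DSuc: "\<And>t. D (Suc t) = D t \<bind> K"
    and closed: "\<And>x. x \<in> S \<Longrightarrow> set_pmf (K x) \<subseteq> S"
    and noninc: "\<And>x y. x \<in> S \<Longrightarrow> y \<in> set_pmf (K x) \<Longrightarrow> V y \<le> V x"
    and progress: "\<And>x. x \<in> S - G \<Longrightarrow> 0 < measure_pmf.prob (K x) {y. V y < V x}"
  shows "(\<lambda>t. measure_pmf.prob (D t) G) \<longlonglongrightarrow> 1"
proof -
  have supp: "set_pmf (D t) \<subseteq> S" for t
    by (induction t) (use D0 closed in \<open>auto simp: DSuc\<close>)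
  have fin_K: "finite (set_pmf (K x))" if "x \<in> S" for x
    using closed[OF that] S by (rule finite_subset)
  have "\<exists>\<delta>>0. \<forall>x\<in>S - G. \<delta> \<le> measure_pmf.prob (K x) {y. V y < V x}"
    using S progress by (intro finite_pos_lower_bound) auto
  then obtain \<delta> where \<delta>: "\<delta> > 0" and \<delta>_le: "\<forall>x\<in>S - G. \<delta> \<le> measure_pmf.prob (K x) {y. V y < V x}"
    by blast
  define E where "E t = measure_pmf.expectation (D t) (\<lambda>x. real (V x))" for t
  define P where "P t = measure_pmf.prob (D t) (- G)" for t
  have drift: "E (Suc t) + \<delta> * P t \<le> E t" for t
  proof -
    have step: "measure_pmf.expectation (K x) (\<lambda>y. real (V y)) \<le> real (V x) - \<delta> * indicator (- G) x"
      if x: "x \<in> S" for x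
    proof -
      have "measure_pmf.expectation (K x) (\<lambda>y. real (V y)) + measure_pmf.prob (K x) {y. V y < V x} \<le> real (V x)"
        using fin_K[OF x] noninc[OF x] by (rule expectation_plus_prob_decrease_le)
      moreover have "\<delta> * indicator (- G) x \<le> measure_pmf.prob (K x) {y. V y < V x}"
        using \<delta>_le x by (cases "x \<in> G") auto
      ultimately show ?thesis
        by linarith
    qed
    have fin_D: "finite (set_pmf (D t))"
      using supp S by (rule finite_subset)
    have "E (Suc t) \<le> measure_pmf.expectation (D t) (\<lambda>x. real (V x) - \<delta> * indicator (- G) x)"
      unfolding E_def DSuc using S supp fin_K step by (rule expectation_bind_pmf_le)
    also have "\<dots> = E t - \<delta> * P t"
      unfolding E_def P_def by (simp add: integrable_measure_pmf_finite[OF fin_D])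
    finally show ?thesis by simp
  qed
  have "measure_pmf.prob (D t) G = 1 - P t" for t
    using measure_pmf.prob_compl[of G "D t"] by (simp add: P_def Compl_eq_Diff_UNIV)
  moreover have "P \<longlonglongrightarrow> 0"
    by (rule tendsto_0_of_potential_drop[where E = E, OF \<delta> _ _ drift]) (simp_all add: P_def E_def)
  then have "(\<lambda>t. 1 - P t) \<longlonglongrightarrow> 1 - 0"
    by (intro tendsto_diff tendsto_const)
  ultimately show ?thesis
    by simp
qed

lemma row_stochastic_signed_weight:
  fixes W :: "'n::finite \<Rightarrow> 'n \<Rightarrow> real" and d :: real
  assumes "row_stochastic W"
  shows "(\<Sum>j\<in>UNIV. W i j * (if j \<in> T then d else - d)) = d * (2 * (\<Sum>j\<in>T. W i j) - 1)"
proof -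
  have split: "(\<Sum>j\<in>UNIV. f j) = (\<Sum>j\<in>T. f j) + (\<Sum>j\<in>-T. f j)" for f :: "'n \<Rightarrow> real"
    using sum.Int_Diff[of UNIV f T] by (simp add: Compl_eq_Diff_UNIV)
  have "(\<Sum>j\<in>UNIV. W i j * (if j \<in> T then d else - d)) = (\<Sum>j\<in>UNIV. if j \<in> T then d * W i j else - (d * W i j))"
    by (intro sum.cong) auto
  also have "\<dots> = d * (\<Sum>j\<in>T. W i j) - d * (\<Sum>j\<in>-T. W i j)"
    by (simp add: sum.If_cases sum_distrib_left sum_negf)
  finally have "(\<Sum>j\<in>UNIV. W i j * (if j \<in> T then d else - d)) = d * (\<Sum>j\<in>T. W i j) - d * (\<Sum>j\<in>-T. W i j)" .
  moreover have "(\<Sum>j\<in>-T. W i j) = 1 - (\<Sum>j\<in>T. W i j)"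
    using assms split[of "W i"] by (simp add: row_stochastic_def)
  ultimately show ?thesis
    by (simp add: algebra_simps)
qed

lemma social_cost_le_shift:
  fixes W :: "'n::finite \<Rightarrow> 'n \<Rightarrow> real" and d :: int
  assumes W: "row_stochastic W"
    and pointwise: "\<And>j. \<bar>z - x j\<bar> \<le> \<bar>y - x j\<bar> + (if j \<in> T then d else - d)"
  shows "social_cost W x i z \<le> social_cost W x i y + d * (2 * (\<Sum>j\<in>T. W i j) - 1)"
proof -
  have "social_cost W x i z \<le> (\<Sum>j\<in>UNIV. W i j * real_of_int (\<bar>y - x j\<bar> + (if j \<in> T then d else - d)))"
    unfolding social_cost_def using W pointwise
    by (intro sum_mono mult_left_mono) (simp_all only: of_int_le_iff row_stochastic_def)
  also have "\<dots> = social_cost W x i y + (\<Sum>j\<in>UNIV. W i j * (if j \<in> T then real_of_int d else - real_of_int d))"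
    unfolding social_cost_def sum.distrib[symmetric] by (rule sum.cong) (auto simp: algebra_simps)
  finally show ?thesis
    by (simp add: row_stochastic_signed_weight[OF W])
qed

lemma PID_set_cohesive_block:
  fixes W :: "'n::finite \<Rightarrow> 'n \<Rightarrow> real"
  assumes W: "row_stochastic W" and M: "strictly_cohesive W M" and a: "a \<in> Op" and \<theta>: "\<theta> \<in> Op"
  defines "x \<equiv> \<lambda>j. if j \<in> M then a else \<theta>"
  shows "PID_set W Op \<theta> x i = {x i}"
proof -
  have "z = x i" if z: "z \<in> PID_set W Op \<theta> x i" for z
  proof (cases "i \<in> M")
    case False
    then show ?thesis
      using z by (simp add: x_def PID_set_def cog_cost_def)
  next
    case True
    have "\<bar>a - x j\<bar> \<le> \<bar>z - x j\<bar> + (if j \<in> M then - \<bar>z - a\<bar> else - (- \<bar>z - a\<bar>))" for j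
      by (simp add: x_def abs_if)
    then have "social_cost W x i a \<le> social_cost W x i z + real_of_int (- \<bar>z - a\<bar>) * (2 * (\<Sum>j\<in>M. W i j) - 1)"
      by (rule social_cost_le_shift[OF W])
    moreover have "social_cost W x i z \<le> social_cost W x i a"
      using z True by (simp add: PID_set_def x_def)
    ultimately have "real_of_int \<bar>z - a\<bar> * (2 * (\<Sum>j\<in>M. W i j) - 1) \<le> 0"
      by simp
    moreover have "2 * (\<Sum>j\<in>M. W i j) - 1 > 0"
      using M True by (auto simp: strictly_cohesive_def)
    ultimately have "\<bar>z - a\<bar> \<le> 0"
      by (simp add: mult_le_0_iff)
    then show ?thesis
      using True by (simp add: x_def)
  qed
  moreover have "x i \<in> PID_set W Op \<theta> x i"
    using a \<theta> by (simp add: PID_set_def x_def)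
  ultimately show ?thesis
    by blast
qed

lemma PID_set_step_toward_truth:
  fixes W :: "'n::finite \<Rightarrow> 'n \<Rightarrow> real"
  assumes W: "row_stochastic W" and \<theta>: "\<theta> \<in> {k..k+s}" and x: "\<forall>j. x j \<in> {k..k+s}"
    and i: "x i \<noteq> \<theta>" and weight: "(\<Sum>j | x j \<noteq> \<theta>. W i j) \<le> 1/2"
  shows "x i + sgn (\<theta> - x i) \<in> PID_set W {k..k+s} \<theta> x i"
proof -
  define z where "z = x i + sgn (\<theta> - x i)"
  have closer: "\<bar>z - \<theta>\<bar> = \<bar>x i - \<theta>\<bar> - 1" and unit: "\<bar>z - x i\<bar> = 1"
    using i by (auto simp: z_def sgn_if)
  have "z \<in> {k..k+s}"
    using i x[rule_format, of i] \<theta> by (auto simp: z_def sgn_if)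
  moreover have "\<bar>z - x j\<bar> \<le> \<bar>x i - x j\<bar> + (if j \<in> {j. x j \<noteq> \<theta>} then 1 else - 1)" for j
    using closer unit by auto
  then have "social_cost W x i z \<le> social_cost W x i (x i) + real_of_int 1 * (2 * (\<Sum>j | x j \<noteq> \<theta>. W i j) - 1)"
    by (rule social_cost_le_shift[OF W])
  then have "social_cost W x i z \<le> social_cost W x i (x i)"
    using weight by simp
  ultimately show ?thesis
    using closer by (simp add: PID_set_def cog_cost_def flip: z_def)
qed

definition truth_distance :: "int \<Rightarrow> ('n::finite \<Rightarrow> int) \<Rightarrow> nat" where
  "truth_distance \<theta> x = (\<Sum>i\<in>UNIV. nat \<bar>x i - \<theta>\<bar>)"

lemma truth_distance_update_le:
  "\<bar>z - \<theta>\<bar> \<le> \<bar>x i - \<theta>\<bar> \<Longrightarrow> truth_distance \<theta> (x(i := z)) \<le> truth_distance \<theta> x"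
  unfolding truth_distance_def by (intro sum_mono) auto

lemma truth_distance_update_less:
  "\<bar>z - \<theta>\<bar> < \<bar>x i - \<theta>\<bar> \<Longrightarrow> truth_distance \<theta> (x(i := z)) < truth_distance \<theta> x"
  unfolding truth_distance_def by (rule sum_strict_mono_ex1) auto

lemma PID_set_closer:
  "z \<in> PID_set W Op \<theta> x i \<Longrightarrow> z \<in> Op \<and> \<bar>z - \<theta>\<bar> \<le> \<bar>x i - \<theta>\<bar>"
  by (simp add: PID_set_def cog_cost_def del: of_int_abs)

lemma set_PID_step:
  fixes W :: "'n::finite \<Rightarrow> 'n \<Rightarrow> real" and x :: "'n \<Rightarrow> int"
  assumes "admissible_rule W Op \<theta> q" and "\<forall>j. x j \<in> Op"
  shows "set_pmf (PID_step q x) = (\<Union>i. (\<lambda>z. x(i := z)) ` PID_set W Op \<theta> x i)"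
  using assms by (simp add: PID_step_def admissible_rule_def)

lemma admissible_rule_uniform:
  fixes W :: "'n::finite \<Rightarrow> 'n \<Rightarrow> real"
  assumes "finite Op"
  shows "admissible_rule W Op \<theta> (\<lambda>x i. pmf_of_set (PID_set W Op \<theta> x i))"
  unfolding admissible_rule_def
proof (intro allI impI)
  fix x :: "'n \<Rightarrow> int" and i assume "\<forall>j. x j \<in> Op"
  then have "x i \<in> PID_set W Op \<theta> x i"
    by (simp add: PID_set_def)
  moreover have "finite (PID_set W Op \<theta> x i)"
    using assms by (rule finite_subset[rotated]) (auto simp: PID_set_def)
  ultimately show "set_pmf (pmf_of_set (PID_set W Op \<theta> x i)) = PID_set W Op \<theta> x i"
    by (intro set_pmf_of_set) auto
qed

lemma PID_traj_stationary:
  assumes "PID_step q x0 = return_pmf x0"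
  shows "PID_traj q x0 t = return_pmf (replicate (Suc t) x0)"
  by (induction t) (simp_all add: assms bind_return_pmf replicate_append_same)

definition PID_state :: "(('n::finite \<Rightarrow> int) \<Rightarrow> 'n \<Rightarrow> int pmf) \<Rightarrow> ('n \<Rightarrow> int) \<Rightarrow> nat \<Rightarrow> ('n \<Rightarrow> int) pmf" where
  "PID_state q x0 t = map_pmf last (PID_traj q x0 t)"

lemma PID_state_0: "PID_state q x0 0 = return_pmf x0"
  by (simp add: PID_state_def)

lemma PID_state_Suc: "PID_state q x0 (Suc t) = PID_state q x0 t \<bind> PID_step q"
  by (simp add: PID_state_def map_bind_pmf bind_map_pmf pmf.map_comp o_def)

lemma prob_PID_state_consensus_le:
  "measure_pmf.prob (PID_state q x0 t) {x. \<forall>i. x i = \<theta>} \<le> consensus_prob q \<theta> x0 t"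
  unfolding PID_state_def consensus_prob_def measure_map_pmf
proof (rule measure_pmf.finite_measure_mono_AE)
  have "\<exists>y\<in>set xs. \<forall>i. y i = \<theta>" if "xs \<in> set_pmf (PID_traj q x0 t)" and "\<forall>i. last xs i = \<theta>" for xs
  proof
    show "last xs \<in> set xs"
      using that(1) by (cases t) auto
  qed (use that(2) in simp)
  then show "AE xs in measure_pmf (PID_traj q x0 t). xs \<in> last -` {x. \<forall>i. x i = \<theta>} \<longrightarrow> xs \<in> {xs. \<exists>y\<in>set xs. \<forall>i. y i = \<theta>}"
    by (intro AE_pmfI) simp
qed simp

lemma proper_cohesive_set_blocks_consensus:
  fixes W :: "'n::finite \<Rightarrow> 'n \<Rightarrow> real"
  assumes W: "row_stochastic W" and s: "s \<ge> 1" and \<theta>: "\<theta> \<in> {k..k+s}"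
    and M: "M \<noteq> {}" "M \<noteq> UNIV" "strictly_cohesive W M"
  obtains q x0 where "admissible_rule W {k..k+s} \<theta> q" and "\<forall>i. x0 i \<in> {k..k+s}" and "\<exists>i. x0 i = \<theta>"
    and "\<And>t. consensus_prob q \<theta> x0 t = 0"
proof -
  define q where "q x i = pmf_of_set (PID_set W {k..k+s} \<theta> x i)" for x i
  define a where "a = (if \<theta> = k then k + 1 else k)"
  define x0 where "x0 = (\<lambda>j. if j \<in> M then a else \<theta>)"
  have q: "admissible_rule W {k..k+s} \<theta> q"
    unfolding q_def by (rule admissible_rule_uniform) simp
  have a: "a \<in> {k..k+s}" "a \<noteq> \<theta>"
    using s \<theta> by (auto simp: a_def)
  have x0: "\<forall>i. x0 i \<in> {k..k+s}"
    using a \<theta> by (simp add: x0_def)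
  have "PID_set W {k..k+s} \<theta> x0 i = {x0 i}" for i
    unfolding x0_def using W M(3) a(1) \<theta> by (rule PID_set_cohesive_block)
  then have "set_pmf (PID_step q x0) = {x0}"
    by (simp add: set_PID_step[OF q x0])
  then have "PID_traj q x0 t = return_pmf (replicate (Suc t) x0)" for t
    by (intro PID_traj_stationary) (simp add: set_pmf_subset_singleton[symmetric])
  moreover have "\<not> (\<forall>i. x0 i = \<theta>)"
    using M(1) a(2) by (auto simp: x0_def)
  ultimately have "consensus_prob q \<theta> x0 t = 0" for t
    by (simp add: consensus_prob_def)
  moreover have "\<exists>i. x0 i = \<theta>"
    using M(2) by (auto simp: x0_def)
  ultimately show ?thesis
    using that q x0 by blast
qed

lemma exists_PID_move_toward_truth:
  fixes W :: "'n::finite \<Rightarrow> 'n \<Rightarrow> real"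
  assumes W: "row_stochastic W" and coh: "\<forall>M. M \<noteq> {} \<and> strictly_cohesive W M \<longrightarrow> M = UNIV"
    and \<theta>: "\<theta> \<in> {k..k+s}" and x: "\<forall>j. x j \<in> {k..k+s}"
    and some: "\<exists>j. x j = \<theta>" and not_all: "\<not> (\<forall>j. x j = \<theta>)"
  obtains i z where "z \<in> PID_set W {k..k+s} \<theta> x i" and "\<bar>z - \<theta>\<bar> < \<bar>x i - \<theta>\<bar>"
proof -
  let ?T = "{j. x j \<noteq> \<theta>}"
  have "?T \<noteq> {}" and "?T \<noteq> UNIV"
    using some not_all by auto
  then have "\<not> strictly_cohesive W ?T"
    using coh by metis
  then obtain i where i: "x i \<noteq> \<theta>" and weight: "(\<Sum>j\<in>?T. W i j) \<le> 1/2"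
    by (auto simp: strictly_cohesive_def not_less)
  have "x i + sgn (\<theta> - x i) \<in> PID_set W {k..k+s} \<theta> x i"
    using W \<theta> x i weight by (rule PID_set_step_toward_truth)
  moreover have "\<bar>x i + sgn (\<theta> - x i) - \<theta>\<bar> < \<bar>x i - \<theta>\<bar>"
    using i by (auto simp: sgn_if)
  ultimately show ?thesis
    by (rule that)
qed

lemma consensus_prob_tendsto_1:
  fixes W :: "'n::finite \<Rightarrow> 'n \<Rightarrow> real"
  assumes W: "row_stochastic W" and coh: "\<forall>M. M \<noteq> {} \<and> strictly_cohesive W M \<longrightarrow> M = UNIV"
    and q: "admissible_rule W {k..k+s} \<theta> q" and \<theta>: "\<theta> \<in> {k..k+s}"
    and x0: "\<forall>i. x0 i \<in> {k..k+s}" "\<exists>i. x0 i = \<theta>"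
  shows "consensus_prob q \<theta> x0 \<longlonglongrightarrow> 1"
proof -
  define S where "S = {x :: 'n \<Rightarrow> int. (\<forall>i. x i \<in> {k..k+s}) \<and> (\<exists>i. x i = \<theta>)}"
  define G where "G = {x :: 'n \<Rightarrow> int. \<forall>i. x i = \<theta>}"
  have step_cases: "\<exists>i z. z \<in> {k..k+s} \<and> \<bar>z - \<theta>\<bar> \<le> \<bar>x i - \<theta>\<bar> \<and> y = x(i := z)"
    if "x \<in> S" and "y \<in> set_pmf (PID_step q x)" for x y
    using that q PID_set_closer by (fastforce simp: S_def set_PID_step)
  have lim: "(\<lambda>t. measure_pmf.prob (PID_state q x0 t) G) \<longlonglongrightarrow> 1"
  proof (rule lyapunov_prob_goal_tendsto_1[where V = "truth_distance \<theta>"])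
    show "finite S"
      by (rule finite_subset[OF _ finite_funs_into[of "{k..k+s}"]]) (auto simp: S_def)
    show "set_pmf (PID_state q x0 0) \<subseteq> S"
      using x0 by (simp add: PID_state_0 S_def)
    show "set_pmf (PID_step q x) \<subseteq> S" if x: "x \<in> S" for x
    proof
      fix y assume "y \<in> set_pmf (PID_step q x)"
      then obtain i z where z: "z \<in> {k..k+s}" "\<bar>z - \<theta>\<bar> \<le> \<bar>x i - \<theta>\<bar>" and y: "y = x(i := z)"
        using step_cases[OF x] by blast
      obtain j where "x j = \<theta>"
        using x by (auto simp: S_def)
      then have "y j = \<theta>"
        using z y by auto
      then show "y \<in> S"
        using x z y by (auto simp: S_def)
    qed
    show "truth_distance \<theta> y \<le> truth_distance \<theta> x" if "x \<in> S" and "y \<in> set_pmf (PID_step q x)" for x y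
      using step_cases[OF that] truth_distance_update_le by blast
    show "0 < measure_pmf.prob (PID_step q x) {y. truth_distance \<theta> y < truth_distance \<theta> x}"
      if "x \<in> S - G" for x
    proof -
      have "\<forall>j. x j \<in> {k..k+s}" "\<exists>j. x j = \<theta>" "\<not> (\<forall>j. x j = \<theta>)"
        using that by (auto simp: S_def G_def)
      then obtain i z where z: "z \<in> PID_set W {k..k+s} \<theta> x i" and closer: "\<bar>z - \<theta>\<bar> < \<bar>x i - \<theta>\<bar>"
        by (rule exists_PID_move_toward_truth[OF W coh \<theta>])
      have "x(i := z) \<in> set_pmf (PID_step q x)"
        using that q z by (auto simp: S_def set_PID_step)
      then show ?thesis
        using closer by (intro measure_pmf_posI) (auto intro: truth_distance_update_less)
    qed
  qed (rule PID_state_Suc)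
  have lower: "measure_pmf.prob (PID_state q x0 t) G \<le> consensus_prob q \<theta> x0 t" for t
    unfolding G_def by (rule prob_PID_state_consensus_le)
  have upper: "consensus_prob q \<theta> x0 t \<le> 1" for t
    unfolding consensus_prob_def by (rule measure_pmf.prob_le_1)
  show ?thesis
    by (rule tendsto_sandwich[OF _ _ lim tendsto_const]) (intro always_eventually allI lower upper)+
qed

theorem corollary1:
  fixes W :: "'n::finite \<Rightarrow> 'n \<Rightarrow> real" and k s \<theta> :: int
  assumes "row_stochastic W"
    and "s \<ge> 1"
    and "\<theta> \<in> {k..k+s}"
  shows "(\<forall>q. admissible_rule W {k..k+s} \<theta> q \<longrightarrow>
            (\<forall>x0. (\<forall>i. x0 i \<in> {k..k+s}) \<and> (\<exists>i. x0 i = \<theta>) \<longrightarrow>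
                  (consensus_prob q \<theta> x0 \<longlonglongrightarrow> 1)))
     \<longleftrightarrow> (\<forall>M. M \<noteq> {} \<and> strictly_cohesive W M \<longrightarrow> M = UNIV)"
proof (intro iffI allI impI)
  fix M :: "'n set"
  assume consensus: "\<forall>q. admissible_rule W {k..k+s} \<theta> q \<longrightarrow>
            (\<forall>x0. (\<forall>i. x0 i \<in> {k..k+s}) \<and> (\<exists>i. x0 i = \<theta>) \<longrightarrow> (consensus_prob q \<theta> x0 \<longlonglongrightarrow> 1))"
    and M: "M \<noteq> {} \<and> strictly_cohesive W M"
  show "M = UNIV"
  proof (rule ccontr)
    assume proper: "M \<noteq> UNIV"
    obtain q x0 where "admissible_rule W {k..k+s} \<theta> q" "\<forall>i. x0 i \<in> {k..k+s}" "\<exists>i. x0 i = \<theta>"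
      and zero: "\<And>t. consensus_prob q \<theta> x0 t = 0"
      by (rule proper_cohesive_set_blocks_consensus[OF assms conjunct1[OF M] proper conjunct2[OF M]]) blast
    with consensus have "consensus_prob q \<theta> x0 \<longlonglongrightarrow> 1"
      by blast
    moreover have "consensus_prob q \<theta> x0 = (\<lambda>_. 0)"
      using zero by auto
    ultimately show False
      by (simp add: LIMSEQ_const_iff)
  qed
next
  fix q and x0 :: "'n \<Rightarrow> int"
  assume coh: "\<forall>M. M \<noteq> {} \<and> strictly_cohesive W M \<longrightarrow> M = UNIV"
    and q: "admissible_rule W {k..k+s} \<theta> q" and x0: "(\<forall>i. x0 i \<in> {k..k+s}) \<and> (\<exists>i. x0 i = \<theta>)"
  show "consensus_prob q \<theta> x0 \<longlonglongrightarrow> 1"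
    using assms(1) coh q assms(3) x0 by (intro consensus_prob_tendsto_1) auto
qed

end
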